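(* Let $n\ge4$, $x_1,\dots,x_{n-1}>0$, $\gamma,\delta>0$ with $\gamma\ne1\ne\delta$, $x_0=1$, and let $\mathbf{P}$ be the $n\times n$ matrix with entries $p_{ij}=x_{j-1}/x_{i-1}$ except $p_{12}=\delta x_1$, $p_{21}=1/(\delta x_1)$, $p_{13}=\gamma x_2$, $p_{31}=1/(\gamma x_2)$. Let $\mathbf{w}^{EM}$ be the principal right eigenvector of $\mathbf{P}$. If $\delta<1$ and $\delta\le\gamma$, then $w_1^{EM}/w_2^{EM}>\delta x_1$.
   Context: The principal right eigenvector is the positive (Perron) eigenvector belonging to the largest eigenvalue. *)

theory Defs
  imports "Jordan_Normal_Form.Char_Poly"
begin

definition principal_right_eigenvector :: "real mat \<Rightarrow> real vec \<Rightarrow> bool" where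
  "principal_right_eigenvector A w \<longleftrightarrow>
     (\<forall>i<dim_vec w. w $ i > 0) \<and>
     (\<exists>lam. eigenvector A w lam \<and>
        (\<forall>mu. eigenvalue (map_mat complex_of_real A) mu \<longrightarrow> cmod mu \<le> lam))"

text \<open>The perturbed consistent matrix, 0-based indices (paper index k is k-1 here).
x 0 is intended to be 1.\<close>
definition pert_matrix :: "nat \<Rightarrow> (nat \<Rightarrow> real) \<Rightarrow> real \<Rightarrow> real \<Rightarrow> real mat" where
  "pert_matrix n x gam del = mat n n (\<lambda>(i,j).
     if (i,j) = (0,1) then del * x 1
     else if (i,j) = (1,0) then 1 / (del * x 1)
     else if (i,j) = (0,2) then gam * x 2
     else if (i,j) = (2,0) then 1 / (gam * x 2)
     else x j / x i)"

end

theory Submission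
  imports Defs
begin

text \<open>In the paper's 1-based indexing, subtracting \<open>\<delta> x\<^sub>1\<close> times the second row of
\<open>P w = \<lambda> w\<close> from the first row cancels every term except
  \<open>\<lambda> (w\<^sub>1 - \<delta> x\<^sub>1 w\<^sub>2) = (\<gamma> - \<delta>) x\<^sub>2 w\<^sub>3 + (1 - \<delta>) \<Sum>\<^bsub>j \<ge> 4\<^esub> x\<^bsub>j-1\<^esub> w\<^sub>j\<close>.
For \<open>n \<ge> 4\<close> the sum is nonempty, so under \<open>\<delta> < 1\<close> and \<open>\<delta> \<le> \<gamma>\<close> the right-hand side is
positive; as \<open>\<lambda> > 0\<close> for a positive eigenvector of a positive matrix, the claim follows.\<close>

lemma sum_lessThan_split3:
  fixes f :: "nat \<Rightarrow> 'a::comm_monoid_add"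
  assumes "n \<ge> 3"
  shows "(\<Sum>j<n. f j) = f 0 + f 1 + f 2 + (\<Sum>j\<in>{3..<n}. f j)"
proof -
  have "{..<n} = {0,1,2} \<union> {3..<n}" using assms by auto
  then show ?thesis by (simp add: sum.union_disjoint add.assoc)
qed

lemma pert_matrix_index:
  assumes "i < n" "j < n"
  shows "pert_matrix n x gam del $$ (i,j) =
    (if (i,j) = (0,1) then del * x 1
     else if (i,j) = (1,0) then 1 / (del * x 1)
     else if (i,j) = (0,2) then gam * x 2
     else if (i,j) = (2,0) then 1 / (gam * x 2)
     else x j / x i)"
  using assms unfolding pert_matrix_def by simp

lemma pert_matrix_mult_vec_nth:
  assumes "i < n" "dim_vec v = n"
  shows "(pert_matrix n x gam del *\<^sub>v v) $ i = (\<Sum>j<n. pert_matrix n x gam del $$ (i,j) * v $ j)"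
  using assms unfolding pert_matrix_def
  by (simp add: mult_mat_vec_def scalar_prod_def lessThan_atLeast0 mult.commute)

lemma pert_matrix_mult_vec_0:
  assumes "n \<ge> 3" "x 0 = 1" "dim_vec v = n"
  shows "(pert_matrix n x gam del *\<^sub>v v) $ 0
    = v $ 0 + del * x 1 * v $ 1 + gam * x 2 * v $ 2 + (\<Sum>j\<in>{3..<n}. x j * v $ j)"
proof -
  have "(\<Sum>j\<in>{3..<n}. pert_matrix n x gam del $$ (0,j) * v $ j) = (\<Sum>j\<in>{3..<n}. x j * v $ j)"
    using assms(2) by (intro sum.cong) (auto simp: pert_matrix_index)
  then show ?thesis
    using assms by (simp add: pert_matrix_mult_vec_nth sum_lessThan_split3 pert_matrix_index)
qed

lemma pert_matrix_mult_vec_1: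
  assumes "n \<ge> 3" "x 0 = 1" "x 1 \<noteq> 0" "dim_vec v = n"
  shows "(pert_matrix n x gam del *\<^sub>v v) $ 1
    = v $ 0 / (del * x 1) + v $ 1 + (x 2 * v $ 2 + (\<Sum>j\<in>{3..<n}. x j * v $ j)) / x 1"
proof -
  have "(\<Sum>j\<in>{3..<n}. pert_matrix n x gam del $$ (1,j) * v $ j) = (\<Sum>j\<in>{3..<n}. x j * v $ j) / x 1"
    unfolding sum_divide_distrib by (intro sum.cong) (auto simp: pert_matrix_index)
  then show ?thesis
    using assms by (simp add: pert_matrix_mult_vec_nth sum_lessThan_split3 pert_matrix_index add_divide_distrib)
qed

lemma pert_matrix_row_combination:
  assumes "n \<ge> 3" "x 0 = 1" "x 1 \<noteq> 0" "del \<noteq> 0" "dim_vec v = n"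
  shows "(pert_matrix n x gam del *\<^sub>v v) $ 0 - del * x 1 * (pert_matrix n x gam del *\<^sub>v v) $ 1
    = (gam - del) * x 2 * v $ 2 + (1 - del) * (\<Sum>j\<in>{3..<n}. x j * v $ j)"
  using assms(3,4)
  unfolding pert_matrix_mult_vec_0[of n x v gam del, OF assms(1,2,5)]
    pert_matrix_mult_vec_1[of n x v gam del, OF assms(1-3,5)]
  by (simp add: field_simps)

theorem mainTheorem6:
  fixes n :: nat and x :: "nat \<Rightarrow> real" and gam del :: real and w :: "real vec"
  assumes "n \<ge> 4"
    and "x 0 = 1"
    and "\<forall>i. 1 \<le> i \<and> i \<le> n - 1 \<longrightarrow> x i > 0"
    and "gam > 0" and "del > 0" and "gam \<noteq> 1" and "del \<noteq> 1"
    and "principal_right_eigenvector (pert_matrix n x gam del) w"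
    and "del < 1" and "del \<le> gam"
  shows "w $ 0 / w $ 1 > del * x 1"
proof -
  let ?A = "pert_matrix n x gam del"
  define T where "T = (\<Sum>j\<in>{3..<n}. x j * w $ j)"
  obtain lam where w_pos: "\<forall>i<dim_vec w. w $ i > 0" and "eigenvector ?A w lam"
    using assms(8) unfolding principal_right_eigenvector_def by blast
  then have dim_w: "dim_vec w = n" and eigen: "?A *\<^sub>v w = lam \<cdot>\<^sub>v w"
    unfolding eigenvector_def pert_matrix_def by auto
  have x_pos: "x i > 0" if "1 \<le> i" "i < n" for i using assms(3) that by auto
  have w_nth_pos: "w $ i > 0" if "i < n" for i using w_pos dim_w that by auto
  have "T > 0" unfolding T_def
    using assms(1) x_pos w_nth_pos by (intro sum_pos) auto
  have eigen_nth: "(?A *\<^sub>v w) $ i = lam * w $ i" if "i < n" for i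
    using eigen dim_w that by simp
  have "lam * w $ 0 = w $ 0 + del * x 1 * w $ 1 + gam * x 2 * w $ 2 + T"
    using pert_matrix_mult_vec_0[of n x w gam del] eigen_nth[of 0] assms(1,2) dim_w
    by (simp add: T_def)
  also have "\<dots> > 0"
    using \<open>T > 0\<close> assms(1,4,5) x_pos[of 1] x_pos[of 2] w_nth_pos[of 0] w_nth_pos[of 1] w_nth_pos[of 2]
    by (intro add_pos_pos mult_pos_pos) auto
  finally have "lam > 0"
    using w_nth_pos[of 0] assms(1) by (simp add: zero_less_mult_iff)
  have "lam * (w $ 0 - del * x 1 * w $ 1) = (gam - del) * x 2 * w $ 2 + (1 - del) * T"
    using pert_matrix_row_combination[of n x del w gam] eigen_nth[of 0] eigen_nth[of 1]
      assms(1,2,5) dim_w x_pos[of 1]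
    by (simp add: T_def algebra_simps)
  also have "\<dots> > 0"
    using \<open>T > 0\<close> assms(1,9,10) x_pos[of 2] w_nth_pos[of 2]
    by (intro add_nonneg_pos mult_nonneg_nonneg mult_pos_pos) auto
  finally have "w $ 0 - del * x 1 * w $ 1 > 0"
    using \<open>lam > 0\<close> by (simp add: zero_less_mult_iff)
  then show ?thesis using w_nth_pos[of 1] assms(1) by (simp add: field_simps)
qed

end
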